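(* Let $\gamma:\mathbb{Z}\to[0,1]$ be a probability distribution on $\mathbb{Z}$ with bounded support and $\gamma(a)\in\mathbb{Q}$ for all $a$. For $n\ge1$ let $\gamma_n$ be the distribution on $\mathbb{Z}_n$ given by $\gamma_n(k)=\sum_{a\equiv k \pmod n}\gamma(a)$. Then either $\gamma$ is symmetric (i.e. $\gamma(a)=\gamma(-a)$ for all $a\in\mathbb{Z}$), or there exists $N$ such that for every prime $n>N$ the random walk on $\mathbb{Z}_n$ with step distribution $\gamma_n$ is reconstructive.
   Context: The random walk on $\mathbb{Z}_n$ with step distribution $\gamma_n$ has $v(1)$ uniform on $\mathbb{Z}_n$ and independent steps with $\mathbb{P}(v(t+1)-v(t)=k)=\gamma_n(k)$. It is reconstructive if, for any two labelings $f_1,f_2:\mathbb{Z}_n\to\{0,1\}$, the distributions of $\{f_1(v(t))\}_{t\ge1}$ and $\{f_2(v(t))\}_{t\ge1}$ coincide only if there is $\ell$ with $f_1(k)=f_2(k+\ell)$ for all $k$. *)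

theory Defs
  imports "HOL-Computational_Algebra.Primes" Complex_Main
begin

definition supp_dist :: "(int \<Rightarrow> real) \<Rightarrow> int set" where
  "supp_dist \<gamma> = {a. \<gamma> a \<noteq> 0}"

definition gamma_mod :: "(int \<Rightarrow> real) \<Rightarrow> nat \<Rightarrow> int \<Rightarrow> real" where
  "gamma_mod \<gamma> n k = (\<Sum>a\<in>{a\<in>supp_dist \<gamma>. a mod int n = k mod int n}. \<gamma> a)"

text \<open>Elements of Z_n are represented by the integers 0..n-1; a labeling is a
  function f :: int => bool (only its values on 0..n-1 matter).
  walk_from gamma n f x bs: probability that, starting at state x, the next
  length bs labels observed are exactly bs.\<close>

fun walk_from :: "(int \<Rightarrow> real) \<Rightarrow> nat \<Rightarrow> (int \<Rightarrow> bool) \<Rightarrow> int \<Rightarrow> bool list \<Rightarrow> real" where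
  "walk_from \<gamma> n f x [] = 1"
| "walk_from \<gamma> n f x (b # bs) =
     (\<Sum>y\<in>{0..<int n}. if f y = b then gamma_mod \<gamma> n (y - x) * walk_from \<gamma> n f y bs else 0)"

text \<open>Finite-dimensional distribution of the label sequence (f(v(1)), f(v(2)), ...)
  with v(1) uniform on Z_n: probability that the first length w labels equal w.\<close>

fun label_prob :: "(int \<Rightarrow> real) \<Rightarrow> nat \<Rightarrow> (int \<Rightarrow> bool) \<Rightarrow> bool list \<Rightarrow> real" where
  "label_prob \<gamma> n f [] = 1"
| "label_prob \<gamma> n f (b # bs) =
     (1 / real n) * (\<Sum>x\<in>{0..<int n}. if f x = b then walk_from \<gamma> n f x bs else 0)"

text \<open>Two label processes have the same distribution iff all their
  finite-dimensional (cylinder) probabilities agree.\<close>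

definition same_label_distr :: "(int \<Rightarrow> real) \<Rightarrow> nat \<Rightarrow> (int \<Rightarrow> bool) \<Rightarrow> (int \<Rightarrow> bool) \<Rightarrow> bool" where
  "same_label_distr \<gamma> n f1 f2 \<longleftrightarrow> (\<forall>w. label_prob \<gamma> n f1 w = label_prob \<gamma> n f2 w)"

definition reconstructive :: "(int \<Rightarrow> real) \<Rightarrow> nat \<Rightarrow> bool" where
  "reconstructive \<gamma> n \<longleftrightarrow>
     (\<forall>f1 f2 :: int \<Rightarrow> bool. same_label_distr \<gamma> n f1 f2 \<longrightarrow>
        (\<exists>l::int. \<forall>k\<in>{0..<int n}. f1 k = f2 ((k + l) mod int n)))"

end

theory Submission
  imports Defs "HOL-Computational_Algebra.Computational_Algebra"
begin

text \<open>The transition operator of the walk on \<open>\<int>/n\<close> is diagonalised by the characters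
  \<open>x \<mapsto> \<omega>^(j x)\<close>, \<open>\<omega> = exp(2 \<pi> i / n)\<close>, with eigenvalues \<open>\<lambda>_j = \<Sum>_a \<gamma>(a) \<omega>^(j a)\<close>. If these
  are distinct and nonzero, polynomials in the operator without constant term project onto
  single characters, so the label distribution determines the triple products
  \<open>F(j) F(j0)^r F(-j - r j0)\<close> of the Fourier coefficients \<open>F\<close> of the labeling. For prime \<open>n\<close>
  these determine \<open>F\<close> up to a linear phase \<open>\<omega>^(l j)\<close>, i.e. the labeling up to rotation.

  The spectrum is simple for large primes because \<open>1 + x + \<dots> + x^(n-1)\<close> is irreducible for
  prime \<open>n\<close>: an integer polynomial of degree \<open>< n\<close> vanishing at \<open>\<omega>\<close> has all coefficients
  equal, so one with fewer than \<open>n\<close> nonzero coefficients vanishes. After clearing the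
  denominators of \<open>\<gamma>\<close>, both \<open>\<lambda>_j\<close> and \<open>\<lambda>_j - \<lambda>_j'\<close> are values at \<open>\<omega>\<close> of such polynomials with at
  most \<open>2 |supp \<gamma>|\<close> terms. Hence \<open>\<lambda>_j \<noteq> 0\<close>, and \<open>\<lambda>_j = \<lambda>_j'\<close> forces the weighted residues
  \<open>j a mod n\<close> and \<open>j' a mod n\<close> to agree; comparing the support element of largest modulus gives
  \<open>j' = \<plusminus>j\<close>, and \<open>j' = -j\<close> makes \<open>\<gamma>\<close> symmetric.\<close>

section \<open>Eisenstein's criterion and the cyclotomic polynomial of a prime\<close>

lemma eisenstein_factor_degree_0:
  fixes X Y :: "'a::idom poly" and p :: 'a
  assumes p: "prime_elem p"
    and low: "\<And>k. k < degree (X * Y) \<Longrightarrow> p dvd coeff (X * Y) k"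
    and lead: "\<not> p dvd lead_coeff (X * Y)"
    and "p dvd coeff X 0" and Y0: "\<not> p dvd coeff Y 0"
  shows "degree Y = 0"
proof -
  have X: "X \<noteq> 0" and Y: "Y \<noteq> 0" using lead by auto
  have "\<not> p dvd lead_coeff X" using lead by (auto simp: lead_coeff_mult)
  then have ex: "\<exists>i. \<not> p dvd coeff X i" by blast
  define i where "i = (LEAST i. \<not> p dvd coeff X i)"
  have Xi: "\<not> p dvd coeff X i" unfolding i_def using ex by (rule LeastI_ex)
  have below: "p dvd coeff X k" if "k < i" for k using that not_less_Least unfolding i_def by blast
  have "i \<le> degree X" using \<open>\<not> p dvd lead_coeff X\<close> unfolding i_def by (simp add: Least_le)
  have "coeff (X * Y) i = (\<Sum>k<i. coeff X k * coeff Y (i - k)) + coeff X i * coeff Y 0"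
    by (simp add: coeff_mult lessThan_Suc_atMost[symmetric])
  moreover have "p dvd (\<Sum>k<i. coeff X k * coeff Y (i - k))" by (intro dvd_sum) (simp add: below)
  moreover have "\<not> p dvd coeff X i * coeff Y 0" using p Xi Y0 by (simp add: prime_elem_dvd_mult_iff)
  ultimately have "\<not> p dvd coeff (X * Y) i" by (metis dvd_add_right_iff)
  then have "degree X + degree Y \<le> i" using low degree_mult_eq[OF X Y] by (metis not_less)
  with \<open>i \<le> degree X\<close> show ?thesis by simp
qed

lemma eisenstein_criterion:
  fixes A B :: "'a::idom poly" and p :: 'a
  assumes p: "prime_elem p"
    and low: "\<And>k. k < degree (A * B) \<Longrightarrow> p dvd coeff (A * B) k"
    and const: "\<not> p\<^sup>2 dvd coeff (A * B) 0"
    and lead: "\<not> p dvd lead_coeff (A * B)"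
  shows "degree A = 0 \<or> degree B = 0"
proof (rule ccontr)
  assume nonconst: "\<not> (degree A = 0 \<or> degree B = 0)"
  then have "A \<noteq> 0" "B \<noteq> 0" by auto
  then have "degree (A * B) > 0" using nonconst by (simp add: degree_mult_eq)
  then have "p dvd coeff (A * B) 0" using low by blast
  then have "p dvd coeff A 0 * coeff B 0" by (simp add: coeff_mult)
  then have "p dvd coeff A 0 \<or> p dvd coeff B 0" using p by (simp add: prime_elem_dvd_mult_iff)
  moreover have "\<not> (p dvd coeff A 0 \<and> p dvd coeff B 0)"
    using const by (auto simp: coeff_mult power2_eq_square intro: mult_dvd_mono)
  ultimately show False
    using eisenstein_factor_degree_0[OF p low lead] eisenstein_factor_degree_0[of p B A] p low lead nonconst
    by (auto simp: mult.commute)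
qed

definition geom_poly :: "nat \<Rightarrow> 'a::comm_ring_1 poly" where
  "geom_poly n = (\<Sum>i<n. [:0, 1:] ^ i)"

lemma coeff_geom_poly: "coeff (geom_poly n) k = (if k < n then 1 else 0)"
  by (simp add: geom_poly_def coeff_sum monom_altdef[of 1, simplified, symmetric] coeff_monom)

lemma of_int_poly_geom_poly: "map_poly of_int (geom_poly n) = geom_poly n"
  by (rule poly_eqI) (simp add: coeff_map_poly coeff_geom_poly)

lemma degree_geom_poly: "n \<ge> 1 \<Longrightarrow> degree (geom_poly n :: 'a::comm_ring_1 poly) = n - 1"
  by (intro antisym degree_le le_degree) (auto simp: coeff_geom_poly)

lemma poly_geom_poly_root_of_unity:
  fixes z :: "'a::idom"
  assumes "z ^ n = 1" "z \<noteq> 1"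
  shows "poly (geom_poly n) z = 0"
proof -
  have "(1 - z) * poly (geom_poly n) z = 1 - z ^ n"
    by (simp add: geom_poly_def poly_sum one_diff_power_eq)
  then show ?thesis using assms by simp
qed

text \<open>Substituting \<open>x + 1\<close> turns \<open>geom_poly n\<close> into \<open>((x + 1)^n - 1) / x\<close>, whose
  coefficients are binomial coefficients; for prime \<open>n\<close> it is an Eisenstein polynomial.\<close>

lemma pcompose_X_power: "pcompose ([:0, 1:] ^ i) q = q ^ i"
  by (induction i) (simp_all add: pcompose_1 pcompose_mult pcompose_pCons)

lemma coeff_geom_poly_shift:
  "coeff (pcompose (geom_poly n) [:1, 1:]) k = (if k < n then int (n choose (k + 1)) else 0)"
proof -
  have "[:0, 1:] * pcompose (geom_poly n) [:1, 1:] = [:1, 1 :: int:] ^ n - 1"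
    using power_diff_1_eq[of "[:1, 1 :: int:]" n]
    by (simp add: geom_poly_def pcompose_sum pcompose_X_power one_pCons)
  moreover have "coeff ([:0, 1:] * q) (Suc k) = coeff q k" for q :: "int poly" by simp
  ultimately have "coeff (pcompose (geom_poly n) [:1, 1:]) k = coeff ([:1, 1 :: int:] ^ n) (Suc k) - coeff 1 (Suc k)"
    by (metis coeff_diff)
  also have "\<dots> = (if k < n then int (n choose (k + 1)) else 0)"
    by (auto simp: coeff_linear_poly_power coeff_1 degree_linear_power intro!: coeff_eq_0)
  finally show ?thesis .
qed

lemma irreducible_geom_poly:
  assumes n: "prime n"
  shows "irreducible (geom_poly n :: int poly)"
proof (rule irreducibleI)
  have n2: "n \<ge> 2" using n by (simp add: prime_ge_2_nat)
  then have deg: "degree (geom_poly n :: int poly) = n - 1" by (simp add: degree_geom_poly)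
  with n2 show "geom_poly n \<noteq> (0 :: int poly)" "\<not> geom_poly n dvd (1 :: int poly)"
    by (auto simp: is_unit_poly_iff)
  fix A B :: "int poly" assume AB: "geom_poly n = A * B"
  define shift where "shift q = pcompose q [:1, 1 :: int:]" for q
  have shift_AB: "shift A * shift B = pcompose (geom_poly n) [:1, 1:]"
    by (simp add: shift_def AB pcompose_mult)
  have coeff_AB: "coeff (shift A * shift B) k = (if k < n then int (n choose (k + 1)) else 0)" for k
    by (simp add: shift_AB coeff_geom_poly_shift)
  have deg_AB: "degree (shift A * shift B) = n - 1"
    by (simp add: shift_AB degree_pcompose deg)
  have "degree (shift A) = 0 \<or> degree (shift B) = 0"
  proof (rule eisenstein_criterion[where p = "int n"])
    show "prime_elem (int n)" using n by simp
    show "int n dvd coeff (shift A * shift B) k" if "k < degree (shift A * shift B)" for k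
      using that n n2 deg_AB by (simp add: coeff_AB dvd_choose_prime)
    have "\<not> int n * int n dvd int n * 1" using n2 by (subst dvd_mult_cancel_left) auto
    then show "\<not> (int n)\<^sup>2 dvd coeff (shift A * shift B) 0"
      using n2 by (simp add: coeff_AB power2_eq_square)
    show "\<not> int n dvd lead_coeff (shift A * shift B)"
      using n2 by (simp add: deg_AB coeff_AB)
  qed
  then have "degree A = 0 \<or> degree B = 0" by (simp add: shift_def degree_pcompose)
  moreover have "lead_coeff A * lead_coeff B = 1"
    using n2 by (metis AB lead_coeff_mult deg coeff_geom_poly diff_less less_le_trans one_le_numeral zero_less_one)
  ultimately show "is_unit A \<or> is_unit B"
    by (metis is_unit_const_poly_iff degree_0_id dvdI mult.commute)
qed

definition of_fract :: "int fract \<Rightarrow> 'a::field_char_0" where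
  "of_fract x = of_int (fst (quot_of_fract x)) / of_int (snd (quot_of_fract x))"

lemma of_fract_Fract: "b \<noteq> 0 \<Longrightarrow> of_fract (Fract a b) = of_int a / of_int b"
proof -
  assume b: "b \<noteq> 0"
  define p q where "p = fst (quot_of_fract (Fract a b))" and "q = snd (quot_of_fract (Fract a b))"
  have q: "q \<noteq> 0" by (simp add: q_def)
  have "Fract p q = Fract a b" by (simp add: p_def q_def)
  then have "(of_int p * of_int b :: 'a) = of_int a * of_int q"
    using b q by (metis eq_fract(1) of_int_mult)
  with b q show ?thesis by (simp add: of_fract_def flip: p_def q_def) (simp add: divide_simps)
qed

lemma of_fract_add: "of_fract (x + y) = of_fract x + of_fract y"
  by (cases x; cases y) (simp add: of_fract_Fract divide_simps)

lemma of_fract_mult: "of_fract (x * y) = of_fract x * of_fract y"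
  by (cases x; cases y) (simp add: of_fract_Fract)

lemma of_fract_eq_0_iff [simp]: "of_fract x = 0 \<longleftrightarrow> x = 0"
  by (cases x) (simp add: of_fract_Fract Zero_fract_def eq_fract)

lemma of_fract_to_fract [simp]: "of_fract (to_fract a) = of_int a"
  by (simp add: to_fract_def of_fract_Fract)

lemma of_fract_sum: "of_fract (sum f A) = (\<Sum>x\<in>A. of_fract (f x))"
  by (induction A rule: infinite_finite_induct) (simp_all add: of_fract_add Zero_fract_def of_fract_Fract)

lemma poly_map_of_fract_add:
  "poly (map_poly of_fract (p + q)) z = poly (map_poly of_fract p) z + poly (map_poly of_fract q) z"
proof -
  have "map_poly of_fract (p + q) = (map_poly of_fract p + map_poly of_fract q :: 'a::field_char_0 poly)"
    by (rule poly_eqI) (simp add: coeff_map_poly of_fract_add)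
  then show ?thesis by simp
qed

lemma poly_map_of_fract_mult:
  "poly (map_poly of_fract (p * q)) z = poly (map_poly of_fract p) z * poly (map_poly of_fract q) z"
proof -
  have "map_poly of_fract (p * q) = (map_poly of_fract p * map_poly of_fract q :: 'a::field_char_0 poly)"
    by (rule poly_eqI) (simp add: coeff_map_poly coeff_mult of_fract_sum of_fract_mult)
  then show ?thesis by simp
qed

text \<open>Over the fraction field, a nonzero polynomial \<open>m\<close> of least degree vanishing at \<open>z\<close>
  divides every polynomial vanishing at \<open>z\<close> (Euclidean division), hence also the irreducible
  \<open>P\<close>, of which it must be an associate.\<close>

lemma irreducible_int_poly_dvd_of_common_root:
  fixes P D :: "int poly" and z :: "'a::field_char_0"
  assumes P: "irreducible P" "degree P \<noteq> 0"
    and roots: "poly (map_poly of_int P) z = 0" "poly (map_poly of_int D) z = 0"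
  shows "P dvd D"
proof -
  define ev where "ev q = poly (map_poly of_fract q) z" for q :: "int fract poly"
  have ev_fract_poly: "ev (fract_poly q) = poly (map_poly of_int q) z" for q
    by (simp add: ev_def map_poly_map_poly o_def)
  have irr: "irreducible (fract_poly P)" and content: "content P = 1"
    using P nonconst_poly_irreducible_iff by blast+
  define S where "S = {q. q \<noteq> 0 \<and> ev q = 0}"
  have "fract_poly P \<in> S" using P roots by (auto simp: S_def ev_fract_poly)
  then obtain m where m: "m \<in> S" and least: "\<And>q. q \<in> S \<Longrightarrow> degree m \<le> degree q"
    using ex_has_least_nat[of "\<lambda>q. q \<in> S" _ degree] by blast
  have m_dvd: "m dvd q" if "ev q = 0" for q
  proof (rule ccontr)
    assume "\<not> m dvd q"
    then have "q mod m \<noteq> 0" by (simp add: dvd_eq_mod_eq_0)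
    moreover have "q mod m = q + (- (q div m)) * m" by (simp add: minus_div_mult_eq_mod[symmetric])
    then have "ev (q mod m) = ev q + ev (- (q div m)) * ev m"
      by (simp only: ev_def poly_map_of_fract_add poly_map_of_fract_mult)
    then have "ev (q mod m) = 0" using that m by (simp add: S_def)
    ultimately have "degree m \<le> degree (q mod m)" by (intro least) (simp add: S_def)
    moreover have "degree (q mod m) < degree m"
      using \<open>q mod m \<noteq> 0\<close> m by (intro degree_mod_less') (auto simp: S_def)
    ultimately show False by simp
  qed
  have "\<not> is_unit m"
  proof
    assume "is_unit m"
    then obtain c where "m = [:c:]" by (auto simp: is_unit_poly_iff)
    with m show False by (simp add: S_def ev_def map_poly_pCons)
  qed
  moreover have "m dvd fract_poly P" using m_dvd roots by (simp add: ev_fract_poly)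
  ultimately have "fract_poly P dvd m" using irr irreducibleD' by blast
  also have "m dvd fract_poly D" using m_dvd roots by (simp add: ev_fract_poly)
  finally show ?thesis using content by (rule fract_poly_dvdD)
qed

section \<open>Fourier analysis on \<open>\<int>/n\<close>\<close>

definition unit_root :: "nat \<Rightarrow> int \<Rightarrow> complex" where
  "unit_root n m = cis (2 * pi * of_int m / real n)"

lemma unit_root_add: "unit_root n (a + b) = unit_root n a * unit_root n b"
  by (simp add: unit_root_def cis_mult add_divide_distrib distrib_left)

lemma unit_root_0 [simp]: "unit_root n 0 = 1"
  by (simp add: unit_root_def)

lemma unit_root_power: "unit_root n a ^ k = unit_root n (a * int k)"
  by (simp add: unit_root_def DeMoivre algebra_simps)

lemma unit_root_eq_1_iff:
  assumes "n \<ge> 1"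
  shows "unit_root n m = 1 \<longleftrightarrow> int n dvd m"
proof
  assume "unit_root n m = 1"
  then have "cos (2 * pi * of_int m / real n) = 1"
    unfolding unit_root_def by (metis cis.sel(1) one_complex.sel(1))
  then obtain k :: int where "2 * pi * of_int m / real n = k * 2 * pi" by (auto simp: cos_one_2pi_int)
  then have "real_of_int m = of_int k * real n" using assms by (simp add: field_simps)
  then have "m = k * int n" by (metis of_int_eq_iff of_int_mult of_int_of_nat_eq)
  then show "int n dvd m" by simp
next
  assume "int n dvd m"
  then obtain k where "m = int n * k" ..
  then have "2 * pi * of_int m / real n = 2 * pi * of_int k" using assms by simp
  then show "unit_root n m = 1" by (simp add: unit_root_def)
qed

lemma unit_root_mod:
  assumes "n \<ge> 1"
  shows "unit_root n (a mod int n) = unit_root n a"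
proof -
  have "unit_root n a = unit_root n (a mod int n) * unit_root n (int n * (a div int n))"
    by (simp flip: unit_root_add)
  then show ?thesis using assms by (simp add: unit_root_eq_1_iff)
qed

lemma unit_root_cong: "n \<ge> 1 \<Longrightarrow> a mod int n = b mod int n \<Longrightarrow> unit_root n a = unit_root n b"
  by (metis unit_root_mod)

lemma root_of_unity_eq_unit_root:
  assumes n: "n \<ge> 1" and c: "c ^ n = 1"
  shows "\<exists>m. c = unit_root n m"
proof -
  have "norm c = 1" using power_eq_1_iff[OF c] n by auto
  then have "c \<noteq> 0" by auto
  with \<open>norm c = 1\<close> have c_Arg: "c = cis (Arg c)" using cis_Arg[of c] by (auto simp: sgn_div_norm)
  then have "cis (real n * Arg c) = 1" using c by (metis DeMoivre)
  then have "cos (real n * Arg c) = 1" by (metis cis.sel(1) one_complex.sel(1))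
  then obtain k :: int where "real n * Arg c = k * 2 * pi" by (auto simp: cos_one_2pi_int)
  then have "Arg c = 2 * pi * of_int k / real n" using n by (simp add: field_simps)
  then show ?thesis using c_Arg by (auto simp: unit_root_def)
qed

lemma sum_atLeastLessThan_int: "(\<Sum>x\<in>{0..<int n}. g x) = (\<Sum>i<n. g (int i))"
proof -
  have "{0..<int n} = int ` {..<n}" by (auto simp: image_iff intro!: bexI[of _ "nat _"])
  then show ?thesis by (simp add: sum.reindex)
qed

lemma sum_unit_root:
  assumes n: "n \<ge> 1"
  shows "(\<Sum>x\<in>{0..<int n}. unit_root n (m * x)) = (if int n dvd m then of_nat n else 0)"
proof (cases "int n dvd m")
  case True
  then have "unit_root n (m * x) = 1" for x using n by (simp add: unit_root_eq_1_iff)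
  with True show ?thesis by simp
next
  case False
  define z where "z = unit_root n m"
  have "(\<Sum>x\<in>{0..<int n}. unit_root n (m * x)) = (\<Sum>i<n. z ^ i)"
    by (simp add: sum_atLeastLessThan_int z_def unit_root_power)
  then have "(1 - z) * (\<Sum>x\<in>{0..<int n}. unit_root n (m * x)) = 1 - z ^ n"
    by (simp add: one_diff_power_eq)
  also have "z ^ n = 1" using n by (simp add: z_def unit_root_power unit_root_eq_1_iff)
  finally show ?thesis using False n by (simp add: z_def unit_root_eq_1_iff)
qed

lemma int_poly_root_of_unity_eq_smult_geom_poly:
  assumes n: "prime n" and deg: "degree D < n"
    and root: "poly (map_poly of_int D) (unit_root n 1) = 0"
  shows "\<exists>c. D = smult c (geom_poly n)"
proof -
  have n2: "n \<ge> 2" using n by (simp add: prime_ge_2_nat)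
  have deg_geom: "degree (geom_poly n :: int poly) = n - 1" using n2 by (simp add: degree_geom_poly)
  have "poly (geom_poly n) (unit_root n 1) = 0"
    using n2 by (intro poly_geom_poly_root_of_unity) (simp_all add: unit_root_power unit_root_eq_1_iff)
  then have "geom_poly n dvd D"
    using n2 by (intro irreducible_int_poly_dvd_of_common_root[OF irreducible_geom_poly[OF n] _ _ root])
      (simp_all add: deg_geom of_int_poly_geom_poly)
  then obtain q where D: "D = geom_poly n * q" ..
  show ?thesis
  proof (cases "q = 0")
    case False
    moreover have "geom_poly n \<noteq> (0 :: int poly)" using deg_geom n2 by auto
    ultimately have "degree q = 0" using D deg deg_geom n2 by (simp add: degree_mult_eq)
    then obtain c where "q = [:c:]" by (metis degree_0_id)
    then show ?thesis using D by (intro exI[of _ c]) simp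
  qed (simp add: D)
qed

text \<open>A nonzero integer multiple of \<open>geom_poly n\<close> has all \<open>n\<close> coefficients nonzero.\<close>

lemma sparse_int_poly_root_of_unity_eq_0:
  assumes "prime n" "degree D < n" "poly (map_poly of_int D) (unit_root n 1) = 0"
    and sparse: "card {k. coeff D k \<noteq> 0} < n"
  shows "D = 0"
proof -
  obtain c where D: "D = smult c (geom_poly n)"
    using int_poly_root_of_unity_eq_smult_geom_poly assms(1-3) by blast
  show ?thesis
  proof (cases "c = 0")
    case False
    then have "{k. coeff D k \<noteq> 0} = {..<n}" by (auto simp: D coeff_geom_poly)
    then show ?thesis using sparse by simp
  qed (simp add: D)
qed

definition dft :: "nat \<Rightarrow> (int \<Rightarrow> complex) \<Rightarrow> int \<Rightarrow> complex" where
  "dft n h j = (\<Sum>y\<in>{0..<int n}. h y * unit_root n (- (j * y)))"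

lemma dft_cong_freq: "n \<ge> 1 \<Longrightarrow> j mod int n = j' mod int n \<Longrightarrow> dft n h j = dft n h j'"
  unfolding dft_def
  by (intro sum.cong refl arg_cong2[where f = "(*)"] unit_root_cong) (auto intro: mod_minus_cong mod_mult_cong)

lemma dft_0: "dft n h 0 = (\<Sum>y\<in>{0..<int n}. h y)"
  by (simp add: dft_def)

lemma dft_modulate: "dft n (\<lambda>y. h y * unit_root n (b * y)) a = dft n h (a - b)"
  unfolding dft_def
  by (intro sum.cong refl) (simp add: mult.assoc algebra_simps flip: unit_root_add)

lemma dft_inversion:
  assumes n: "n \<ge> 1" and x: "x \<in> {0..<int n}"
  shows "(\<Sum>j\<in>{0..<int n}. dft n h j * unit_root n (j * x)) = of_nat n * h x"
proof -
  have "(\<Sum>j\<in>{0..<int n}. dft n h j * unit_root n (j * x))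
      = (\<Sum>y\<in>{0..<int n}. h y * (\<Sum>j\<in>{0..<int n}. unit_root n ((x - y) * j)))"
    unfolding dft_def sum_distrib_right sum_distrib_left
    by (subst sum.swap) (intro sum.cong refl, simp add: mult.assoc algebra_simps flip: unit_root_add)
  also have "\<dots> = (\<Sum>y\<in>{0..<int n}. if y = x then of_nat n * h y else 0)"
  proof (intro sum.cong refl)
    fix y assume y: "y \<in> {0..<int n}"
    have "int n dvd x - y \<longleftrightarrow> y = x"
      using x y by (auto simp: mod_eq_dvd_iff[symmetric])
    then show "h y * (\<Sum>j\<in>{0..<int n}. unit_root n ((x - y) * j)) = (if y = x then of_nat n * h y else 0)"
      by (simp add: sum_unit_root[OF n])
  qed
  also have "\<dots> = of_nat n * h x" using x by simp
  finally show ?thesis .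
qed

lemma dft_eq_modulated_imp_shift:
  assumes n: "n \<ge> 1" and mod: "\<And>j. j \<in> {0..<int n} \<Longrightarrow> dft n g j = dft n h j * unit_root n (l * j)"
    and y: "y \<in> {0..<int n}"
  shows "g y = h ((y + l) mod int n)"
proof -
  have "of_nat n * g y = (\<Sum>j\<in>{0..<int n}. dft n h j * unit_root n (j * ((y + l) mod int n)))"
    unfolding dft_inversion[OF n y, symmetric]
  proof (intro sum.cong refl)
    fix j assume "j \<in> {0..<int n}"
    have "unit_root n (l * j) * unit_root n (j * y) = unit_root n (j * (y + l))"
      by (simp add: algebra_simps flip: unit_root_add)
    also have "\<dots> = unit_root n (j * ((y + l) mod int n))"
      by (rule unit_root_cong[OF n]) (simp add: mod_mult_right_eq)
    finally have "unit_root n (l * j) * unit_root n (j * y) = unit_root n (j * ((y + l) mod int n))" .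
    then show "dft n g j * unit_root n (j * y) = dft n h j * unit_root n (j * ((y + l) mod int n))"
      by (simp add: mod[OF \<open>j \<in> _\<close>] mult.assoc)
  qed
  also have "\<dots> = of_nat n * h ((y + l) mod int n)" using n by (intro dft_inversion) auto
  finally show ?thesis using n by simp
qed

section \<open>The transition operator\<close>

lemma gamma_mod_mod [simp]: "gamma_mod \<gamma> n (a mod int n) = gamma_mod \<gamma> n a"
  by (simp add: gamma_mod_def)

lemma sum_residues_reflect:
  assumes n: "n \<ge> 1" and periodic: "\<And>a. g (a mod int n) = g a"
  shows "(\<Sum>y\<in>{0..<int n}. g (x - y)) = (\<Sum>y\<in>{0..<int n}. g y)"
proof -
  have "(\<Sum>y\<in>{0..<int n}. g (x - y)) = (\<Sum>y\<in>{0..<int n}. g ((x - y) mod int n))"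
    by (simp add: periodic)
  also have "\<dots> = (\<Sum>y\<in>{0..<int n}. g y)"
    by (rule sum.reindex_bij_witness[where i = "\<lambda>d. (x - d) mod int n" and j = "\<lambda>y. (x - y) mod int n"])
      (use n in \<open>auto simp: mod_simps\<close>)
  finally show ?thesis .
qed

text \<open>\<open>trans_op \<gamma> n h x = E[h(v(t+1)) | v(t) = x]\<close>, for complex functions \<open>h\<close> on the
  residues \<open>{0..<n}\<close>.\<close>

definition trans_op :: "(int \<Rightarrow> real) \<Rightarrow> nat \<Rightarrow> (int \<Rightarrow> complex) \<Rightarrow> int \<Rightarrow> complex" where
  "trans_op \<gamma> n h x = (\<Sum>y\<in>{0..<int n}. of_real (gamma_mod \<gamma> n (y - x)) * h y)"

definition walk_eigenvalue :: "(int \<Rightarrow> real) \<Rightarrow> nat \<Rightarrow> int \<Rightarrow> complex" where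
  "walk_eigenvalue \<gamma> n j = (\<Sum>d\<in>{0..<int n}. of_real (gamma_mod \<gamma> n d) * unit_root n (j * d))"

lemma dft_trans_op:
  assumes n: "n \<ge> 1"
  shows "dft n (trans_op \<gamma> n h) j = walk_eigenvalue \<gamma> n j * dft n h j"
proof -
  have inner: "(\<Sum>y\<in>{0..<int n}. of_real (gamma_mod \<gamma> n (z - y)) * unit_root n (- (j * y)))
      = unit_root n (- (j * z)) * walk_eigenvalue \<gamma> n j" for z
  proof -
    have "unit_root n (- (j * y)) = unit_root n (- (j * z)) * unit_root n (j * (z - y))" for y
      by (simp add: algebra_simps flip: unit_root_add)
    then have "(\<Sum>y\<in>{0..<int n}. of_real (gamma_mod \<gamma> n (z - y)) * unit_root n (- (j * y)))
        = unit_root n (- (j * z)) * (\<Sum>y\<in>{0..<int n}. of_real (gamma_mod \<gamma> n (z - y)) * unit_root n (j * (z - y)))"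
      by (simp add: sum_distrib_left ac_simps)
    also have "(\<Sum>y\<in>{0..<int n}. of_real (gamma_mod \<gamma> n (z - y)) * unit_root n (j * (z - y))) = walk_eigenvalue \<gamma> n j"
      unfolding walk_eigenvalue_def
      by (rule sum_residues_reflect[OF n, where g = "\<lambda>d. of_real (gamma_mod \<gamma> n d) * unit_root n (j * d)"])
        (simp add: unit_root_cong[OF n, of "j * (_ mod int n)"] mod_mult_right_eq)
    finally show ?thesis .
  qed
  have "dft n (trans_op \<gamma> n h) j
      = (\<Sum>z\<in>{0..<int n}. h z * (\<Sum>y\<in>{0..<int n}. of_real (gamma_mod \<gamma> n (z - y)) * unit_root n (- (j * y))))"
    unfolding dft_def trans_op_def sum_distrib_right sum_distrib_left
    by (subst sum.swap) (simp add: ac_simps)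
  also have "\<dots> = (\<Sum>z\<in>{0..<int n}. h z * (unit_root n (- (j * z)) * walk_eigenvalue \<gamma> n j))"
    by (simp only: inner)
  also have "\<dots> = walk_eigenvalue \<gamma> n j * dft n h j"
    by (simp add: dft_def sum_distrib_left ac_simps)
  finally show ?thesis .
qed

lemma trans_op_power_spectral:
  assumes n: "n \<ge> 1" and x: "x \<in> {0..<int n}"
  shows "(trans_op \<gamma> n ^^ t) h x
    = (\<Sum>j\<in>{0..<int n}. walk_eigenvalue \<gamma> n j ^ t * dft n h j * unit_root n (j * x)) / of_nat n"
proof -
  have "dft n ((trans_op \<gamma> n ^^ t) h) j = walk_eigenvalue \<gamma> n j ^ t * dft n h j" for j
    by (induction t) (simp_all add: dft_trans_op[OF n])
  then show ?thesis using dft_inversion[OF n x, of "(trans_op \<gamma> n ^^ t) h"] n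
    by (simp add: eq_divide_eq mult.commute)
qed

definition poly_op :: "(int \<Rightarrow> real) \<Rightarrow> nat \<Rightarrow> complex poly \<Rightarrow> (int \<Rightarrow> complex) \<Rightarrow> int \<Rightarrow> complex" where
  "poly_op \<gamma> n q h x = (\<Sum>t\<le>degree q. coeff q t * (trans_op \<gamma> n ^^ t) h x)"

lemma poly_op_spectral:
  assumes n: "n \<ge> 1" and x: "x \<in> {0..<int n}"
  shows "poly_op \<gamma> n q h x
    = (\<Sum>j\<in>{0..<int n}. poly q (walk_eigenvalue \<gamma> n j) * dft n h j * unit_root n (j * x)) / of_nat n"
proof -
  have "poly_op \<gamma> n q h x = (\<Sum>t\<le>degree q. \<Sum>j\<in>{0..<int n}.
      coeff q t * walk_eigenvalue \<gamma> n j ^ t * dft n h j * unit_root n (j * x)) / of_nat n"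
    unfolding poly_op_def trans_op_power_spectral[OF n x]
    by (simp add: sum_distrib_left sum_divide_distrib mult.assoc)
  also have "\<dots> = (\<Sum>j\<in>{0..<int n}. \<Sum>t\<le>degree q.
      coeff q t * walk_eigenvalue \<gamma> n j ^ t * dft n h j * unit_root n (j * x)) / of_nat n"
    by (subst sum.swap) (rule refl)
  also have "\<dots> = (\<Sum>j\<in>{0..<int n}. poly q (walk_eigenvalue \<gamma> n j) * dft n h j * unit_root n (j * x)) / of_nat n"
    unfolding poly_altdef sum_distrib_right ..
  finally show ?thesis .
qed

lemma poly_op_monom: "poly_op \<gamma> n (monom 1 t) h x = (trans_op \<gamma> n ^^ t) h x"
proof -
  have "degree (monom 1 t :: complex poly) = t" by (simp add: degree_monom_eq)
  then show ?thesis unfolding poly_op_def coeff_monom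
    by (simp only: if_distrib[of "\<lambda>c. c * _"] mult_1 mult_zero_left sum.delta' finite_atMost atMost_iff
        order_refl if_True)
qed

lemma trans_op_linear:
  "trans_op \<gamma> n (\<lambda>y. \<Sum>i\<in>I. c i * h i y) x = (\<Sum>i\<in>I. c i * trans_op \<gamma> n (h i) x)"
  unfolding trans_op_def by (simp add: sum_distrib_left sum.swap[of _ I] algebra_simps)

lemma trans_op_power_linear:
  "(trans_op \<gamma> n ^^ t) (\<lambda>y. \<Sum>i\<in>I. c i * h i y) = (\<lambda>x. \<Sum>i\<in>I. c i * (trans_op \<gamma> n ^^ t) (h i) x)"
  by (induction t) (simp_all add: trans_op_linear)

lemma poly_op_linear:
  "poly_op \<gamma> n q (\<lambda>y. \<Sum>i\<in>I. c i * h i y) x = (\<Sum>i\<in>I. c i * poly_op \<gamma> n q (h i) x)"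
  unfolding poly_op_def trans_op_power_linear
  by (simp add: sum_distrib_left sum.swap[of _ I] ac_simps)

section \<open>Label patterns and moments\<close>

lemma sum_sum_list_swap:
  "(\<Sum>y\<in>A. \<Sum>w\<leftarrow>ws. F y w) = (\<Sum>w\<leftarrow>ws. \<Sum>y\<in>A. F y w)"
  by (induction ws) (simp_all add: sum.distrib)

text \<open>A pattern prescribes the label at some of the next steps of the walk (\<open>Some b\<close>) and
  leaves the others free (\<open>None\<close>).\<close>

context
  fixes \<gamma> :: "int \<Rightarrow> real" and n :: nat
begin

fun pattern_walk :: "(int \<Rightarrow> bool) \<Rightarrow> int \<Rightarrow> bool option list \<Rightarrow> real" where
  "pattern_walk f x [] = 1"
| "pattern_walk f x (p # ps) = (\<Sum>y\<in>{0..<int n}.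
     gamma_mod \<gamma> n (y - x) * (case p of None \<Rightarrow> 1 | Some b \<Rightarrow> of_bool (f y = b)) * pattern_walk f y ps)"

fun completions :: "bool option list \<Rightarrow> bool list list" where
  "completions [] = [[]]"
| "completions (Some b # ps) = map (Cons b) (completions ps)"
| "completions (None # ps) = map (Cons True) (completions ps) @ map (Cons False) (completions ps)"

lemma pattern_walk_eq_sum_walk_from:
  "pattern_walk f x ps = (\<Sum>w\<leftarrow>completions ps. walk_from \<gamma> n f x w)"
proof (induction ps arbitrary: x)
  case (Cons p ps)
  have step: "walk_from \<gamma> n f x (b # w) = (\<Sum>y\<in>{0..<int n}. gamma_mod \<gamma> n (y - x) * of_bool (f y = b) * walk_from \<gamma> n f y w)"
    for b w by (auto intro!: sum.cong)
  show ?case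
  proof (cases p)
    case None
    have "pattern_walk f x (p # ps) = (\<Sum>y\<in>{0..<int n}. \<Sum>w\<leftarrow>completions ps. gamma_mod \<gamma> n (y - x) * walk_from \<gamma> n f y w)"
      using None by (simp add: Cons.IH sum_list_const_mult)
    also have "\<dots> = (\<Sum>w\<leftarrow>completions ps. walk_from \<gamma> n f x (True # w) + walk_from \<gamma> n f x (False # w))"
      unfolding sum_sum_list_swap step by (intro arg_cong[where f = sum_list] map_cong refl)
        (auto simp: sum.distrib[symmetric] intro!: sum.cong)
    finally show ?thesis using None by (simp add: sum_list_addf o_def)
  next
    case (Some b)
    have "pattern_walk f x (p # ps) = (\<Sum>y\<in>{0..<int n}. \<Sum>w\<leftarrow>completions ps.
        gamma_mod \<gamma> n (y - x) * of_bool (f y = b) * walk_from \<gamma> n f y w)"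
      using Some by (simp add: Cons.IH sum_list_const_mult mult.assoc)
    also have "\<dots> = (\<Sum>w\<leftarrow>completions ps. walk_from \<gamma> n f x (b # w))"
      unfolding sum_sum_list_swap step ..
    finally show ?thesis using Some by (simp add: o_def)
  qed
qed simp

text \<open>Probability that the walk started uniformly shows label \<open>True\<close> and then the pattern.\<close>

definition pattern_prob :: "(int \<Rightarrow> bool) \<Rightarrow> bool option list \<Rightarrow> real" where
  "pattern_prob f ps = (\<Sum>x\<in>{0..<int n}. of_bool (f x) * pattern_walk f x ps) / real n"

lemma pattern_prob_eq_sum_label_prob:
  "pattern_prob f ps = (\<Sum>w\<leftarrow>completions ps. label_prob \<gamma> n f (True # w))"
proof -
  have "pattern_prob f ps = (\<Sum>x\<in>{0..<int n}. \<Sum>w\<leftarrow>completions ps. of_bool (f x) * walk_from \<gamma> n f x w) / real n"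
    by (simp add: pattern_prob_def pattern_walk_eq_sum_walk_from sum_list_const_mult)
  also have "\<dots> = (\<Sum>w\<leftarrow>completions ps. (\<Sum>x\<in>{0..<int n}. of_bool (f x) * walk_from \<gamma> n f x w) / real n)"
    unfolding sum_sum_list_swap by (simp add: divide_inverse sum_list_mult_const)
  also have "\<dots> = (\<Sum>w\<leftarrow>completions ps. label_prob \<gamma> n f (True # w))"
  proof (intro arg_cong[where f = sum_list] map_cong refl)
    fix w
    have "(\<Sum>x\<in>{0..<int n}. of_bool (f x) * walk_from \<gamma> n f x w)
        = (\<Sum>x\<in>{0..<int n}. if f x = True then walk_from \<gamma> n f x w else 0)"
      by (intro sum.cong) auto
    then show "(\<Sum>x\<in>{0..<int n}. of_bool (f x) * walk_from \<gamma> n f x w) / real n = label_prob \<gamma> n f (True # w)"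
      by (simp only: label_prob.simps) simp
  qed
  finally show ?thesis .
qed


lemma same_label_distr_imp_pattern_prob_eq:
  "same_label_distr \<gamma> n f1 f2 \<Longrightarrow> pattern_prob f1 ps = pattern_prob f2 ps"
  unfolding pattern_prob_eq_sum_label_prob same_label_distr_def by presburger

fun gap_pattern :: "nat list \<Rightarrow> bool option list" where
  "gap_pattern [] = []"
| "gap_pattern (t # ts) = replicate (t - 1) None @ Some True # gap_pattern ts"

lemma pattern_walk_replicate_None:
  "of_real (pattern_walk f x (replicate k None @ ps)) = (trans_op \<gamma> n ^^ k) (\<lambda>y. of_real (pattern_walk f y ps)) x"
proof (induction k arbitrary: x)
  case (Suc k)
  then show ?case by (simp add: trans_op_def funpow_swap1)
qed simp

text \<open>The observation operator of a list of polynomials \<open>q\<^sub>1, \<dots>, q\<^sub>k\<close> in the transition operator: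
  \<open>h \<mapsto> q\<^sub>1(P)(f \<cdot> q\<^sub>2(P)(f \<cdot> \<dots> q\<^sub>k(P)(f \<cdot> h)))\<close>; for monomials \<open>P\<^sup>t\<close> it computes the
  probability of seeing label \<open>True\<close> at the prescribed future times.\<close>

fun obs_op :: "(int \<Rightarrow> bool) \<Rightarrow> complex poly list \<Rightarrow> (int \<Rightarrow> complex) \<Rightarrow> int \<Rightarrow> complex" where
  "obs_op f [] h = h"
| "obs_op f (q # qs) h = poly_op \<gamma> n q (\<lambda>y. of_bool (f y) * obs_op f qs h y)"

definition label_moment :: "(int \<Rightarrow> bool) \<Rightarrow> complex poly list \<Rightarrow> complex" where
  "label_moment f qs = (\<Sum>x\<in>{0..<int n}. of_bool (f x) * obs_op f qs (\<lambda>_. 1) x)"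

lemma pattern_walk_gap_pattern:
  "\<forall>t\<in>set ts. t \<ge> 1 \<Longrightarrow> of_real (pattern_walk f x (gap_pattern ts)) = obs_op f (map (monom 1) ts) (\<lambda>_. 1) x"
proof (induction ts arbitrary: x)
  case (Cons t ts)
  have pw: "of_real (pattern_walk f z (gap_pattern ts)) = obs_op f (map (monom 1) ts) (\<lambda>_. 1) z" for z
    using Cons by simp
  have IH: "(\<lambda>y. of_real (pattern_walk f y (Some True # gap_pattern ts)))
      = trans_op \<gamma> n (\<lambda>z. of_bool (f z) * obs_op f (map (monom 1) ts) (\<lambda>_. 1) z)"
    unfolding trans_op_def pw[symmetric] by (intro ext) (auto intro!: sum.cong)
  have "t = Suc (t - 1)" using Cons.prems by simp
  then have "(trans_op \<gamma> n ^^ (t - 1)) (trans_op \<gamma> n g) = (trans_op \<gamma> n ^^ t) g" for g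
    by (metis funpow_Suc_right o_apply)
  moreover have "of_real (pattern_walk f x (gap_pattern (t # ts)))
      = (trans_op \<gamma> n ^^ (t - 1)) (\<lambda>y. of_real (pattern_walk f y (Some True # gap_pattern ts))) x"
    by (simp only: gap_pattern.simps pattern_walk_replicate_None)
  ultimately show ?case by (simp only: IH poly_op_monom list.map obs_op.simps)
qed simp

lemma label_moment_gap_pattern:
  assumes "n \<ge> 1" "\<forall>t\<in>set ts. t \<ge> 1"
  shows "label_moment f (map (monom 1) ts) = of_nat n * of_real (pattern_prob f (gap_pattern ts))"
  using assms by (simp add: label_moment_def pattern_prob_def pattern_walk_gap_pattern)

lemma obs_op_append: "obs_op f (ps @ qs) h = obs_op f ps (obs_op f qs h)"
  by (induction ps) simp_all

lemma obs_op_linear: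
  "obs_op f ps (\<lambda>y. \<Sum>i\<in>I. c i * h i y) x = (\<Sum>i\<in>I. c i * obs_op f ps (h i) x)"
proof (induction ps arbitrary: x)
  case (Cons q ps)
  then show ?case by (simp add: poly_op_linear[symmetric] sum_distrib_left ac_simps)
qed simp

lemma obs_op_expand_monom:
  assumes "coeff q 0 = 0"
  shows "obs_op f (q # qs) h = (\<lambda>x. \<Sum>t\<in>{1..degree q}. coeff q t * obs_op f (monom 1 t # qs) h x)"
proof
  fix x
  have monom: "obs_op f (monom 1 t # qs) h x = (trans_op \<gamma> n ^^ t) (\<lambda>y. of_bool (f y) * obs_op f qs h y) x" for t
    by (simp only: obs_op.simps poly_op_monom)
  have "{..degree q} = insert 0 {1..degree q}" by auto
  then show "obs_op f (q # qs) h x = (\<Sum>t\<in>{1..degree q}. coeff q t * obs_op f (monom 1 t # qs) h x)"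
    unfolding monom obs_op.simps(2)[of f q] poly_op_def using assms by simp
qed

lemma label_moment_eq_if_same_label_distr:
  assumes same: "same_label_distr \<gamma> n f1 f2" and n: "n \<ge> 1" and qs: "\<forall>q\<in>set qs. coeff q 0 = 0"
  shows "label_moment f1 qs = label_moment f2 qs"
proof -
  have "label_moment f1 (map (monom 1) ts @ qs) = label_moment f2 (map (monom 1) ts @ qs)"
    if "\<forall>t\<in>set ts. t \<ge> 1" for ts
    using qs that
  proof (induction qs arbitrary: ts)
    case Nil
    then show ?case using same n by (simp add: label_moment_gap_pattern same_label_distr_imp_pattern_prob_eq)
  next
    case (Cons q qs)
    have expand: "label_moment f (map (monom 1) ts @ q # qs)
        = (\<Sum>t\<in>{1..degree q}. coeff q t * label_moment f (map (monom 1) (ts @ [t]) @ qs))" for f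
    proof -
      have "label_moment f (map (monom 1) ts @ q # qs) = (\<Sum>x\<in>{0..<int n}. of_bool (f x) *
          (\<Sum>t\<in>{1..degree q}. coeff q t * obs_op f (map (monom 1) ts) (obs_op f (monom 1 t # qs) (\<lambda>_. 1)) x))"
        using Cons.prems(1)
        by (simp only: label_moment_def obs_op_append obs_op_expand_monom obs_op_linear list.set_intros)
      also have "\<dots> = (\<Sum>t\<in>{1..degree q}. \<Sum>x\<in>{0..<int n}. coeff q t *
          (of_bool (f x) * obs_op f (map (monom 1) ts) (obs_op f (monom 1 t # qs) (\<lambda>_. 1)) x))"
        by (simp only: sum_distrib_left mult.left_commute) (rule sum.swap)
      also have "\<dots> = (\<Sum>t\<in>{1..degree q}. coeff q t * label_moment f (map (monom 1) (ts @ [t]) @ qs))"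
        by (simp only: label_moment_def obs_op_append sum_distrib_left map_append list.map
            append_assoc append_Cons append_Nil)
      finally show ?thesis .
    qed
    have "label_moment f1 (map (monom 1) (ts @ [t]) @ qs) = label_moment f2 (map (monom 1) (ts @ [t]) @ qs)"
      if "t \<in> {1..degree q}" for t
      using Cons.IH[of "ts @ [t]"] Cons.prems that by auto
    then show ?case unfolding expand by (intro sum.cong refl) simp
  qed
  from this[of "[]"] show ?thesis by simp
qed
end

section \<open>Reconstruction from a simple spectrum\<close>

definition simple_spectrum :: "(int \<Rightarrow> real) \<Rightarrow> nat \<Rightarrow> bool" where
  "simple_spectrum \<gamma> n \<longleftrightarrow> n \<ge> 1 \<and> inj_on (walk_eigenvalue \<gamma> n) {0..<int n}
     \<and> (\<forall>j\<in>{0..<int n}. walk_eigenvalue \<gamma> n j \<noteq> 0)"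

lemma lagrange_poly_exists:
  fixes v :: "'b \<Rightarrow> 'a::field"
  assumes "finite A" "inj_on v A" "\<forall>i\<in>A. v i \<noteq> 0" "a \<in> A"
  shows "\<exists>p. coeff p 0 = 0 \<and> (\<forall>i\<in>A. poly p (v i) = (if i = a then 1 else 0))"
proof -
  define Q where "Q = [:0, 1:] * (\<Prod>i\<in>A - {a}. [:- v i, 1:])"
  have poly_Q: "poly Q z = z * (\<Prod>i\<in>A - {a}. z - v i)" for z
    by (simp add: Q_def poly_prod)
  have "poly Q (v a) \<noteq> 0"
    using assms by (auto simp: poly_Q inj_on_def finite_Diff)
  moreover have "poly Q (v i) = 0" if "i \<in> A" "i \<noteq> a" for i
    using that assms(1) by (auto simp: poly_Q prod_zero_iff)
  ultimately have "coeff (smult (1 / poly Q (v a)) Q) 0 = 0 \<and>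
      (\<forall>i\<in>A. poly (smult (1 / poly Q (v a)) Q) (v i) = (if i = a then 1 else 0))"
    by (auto simp: Q_def)
  then show ?thesis by blast
qed

text \<open>A polynomial in the transition operator projecting onto the eigenspace of frequency \<open>a\<close>;
  it exists once the spectrum is simple, and has no constant term because \<open>0\<close> is not an
  eigenvalue.\<close>

definition spectral_proj :: "(int \<Rightarrow> real) \<Rightarrow> nat \<Rightarrow> int \<Rightarrow> complex poly" where
  "spectral_proj \<gamma> n a = (SOME p. coeff p 0 = 0 \<and>
     (\<forall>i\<in>{0..<int n}. poly p (walk_eigenvalue \<gamma> n i) = (if i = a mod int n then 1 else 0)))"

lemma spectral_proj:
  assumes "simple_spectrum \<gamma> n"
  shows "coeff (spectral_proj \<gamma> n a) 0 = 0"
    and "i \<in> {0..<int n} \<Longrightarrow> poly (spectral_proj \<gamma> n a) (walk_eigenvalue \<gamma> n i) = (if i = a mod int n then 1 else 0)"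
proof -
  have "a mod int n \<in> {0..<int n}" using assms by (simp add: simple_spectrum_def)
  then have "\<exists>p. coeff p 0 = 0 \<and>
      (\<forall>i\<in>{0..<int n}. poly p (walk_eigenvalue \<gamma> n i) = (if i = a mod int n then 1 else 0))"
    using assms by (intro lagrange_poly_exists) (auto simp: simple_spectrum_def)
  from someI_ex[OF this] show "coeff (spectral_proj \<gamma> n a) 0 = 0"
    and "i \<in> {0..<int n} \<Longrightarrow> poly (spectral_proj \<gamma> n a) (walk_eigenvalue \<gamma> n i) = (if i = a mod int n then 1 else 0)"
    unfolding spectral_proj_def by blast+
qed

lemma poly_op_spectral_proj:
  assumes simple: "simple_spectrum \<gamma> n" and x: "x \<in> {0..<int n}"
  shows "poly_op \<gamma> n (spectral_proj \<gamma> n a) h x = dft n h a * unit_root n (a * x) / of_nat n"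
proof -
  have n: "n \<ge> 1" using simple by (simp add: simple_spectrum_def)
  have "poly_op \<gamma> n (spectral_proj \<gamma> n a) h x
      = (\<Sum>j\<in>{0..<int n}. if j = a mod int n then dft n h j * unit_root n (j * x) else 0) / of_nat n"
    unfolding poly_op_spectral[OF n x] by (intro arg_cong2[where f = "(/)"] sum.cong refl) (simp add: spectral_proj(2)[OF simple])
  also have "\<dots> = dft n h (a mod int n) * unit_root n (a mod int n * x) / of_nat n"
    using n by simp
  also have "dft n h (a mod int n) = dft n h a" using n by (intro dft_cong_freq) auto
  also have "unit_root n (a mod int n * x) = unit_root n (a * x)"
    by (rule unit_root_cong[OF n]) (rule mod_mult_left_eq)
  finally show ?thesis .
qed

fun proj_chain :: "(int \<Rightarrow> real) \<Rightarrow> nat \<Rightarrow> int \<Rightarrow> int \<Rightarrow> nat \<Rightarrow> complex poly list" where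
  "proj_chain \<gamma> n j j0 0 = [spectral_proj \<gamma> n j]"
| "proj_chain \<gamma> n j j0 (Suc r) = spectral_proj \<gamma> n (j + int (Suc r) * j0) # proj_chain \<gamma> n j j0 r"

abbreviation label_dft :: "nat \<Rightarrow> (int \<Rightarrow> bool) \<Rightarrow> int \<Rightarrow> complex" where
  "label_dft n f \<equiv> dft n (\<lambda>x. of_bool (f x))"

lemma obs_op_proj_chain:
  assumes simple: "simple_spectrum \<gamma> n" and x: "x \<in> {0..<int n}"
  shows "obs_op \<gamma> n f (proj_chain \<gamma> n j j0 r) (\<lambda>_. 1) x =
    label_dft n f j * label_dft n f j0 ^ r / of_nat n ^ (r + 1) * unit_root n ((j + int r * j0) * x)"
  using x
proof (induction r arbitrary: x)
  case 0
  then show ?case by (simp add: poly_op_spectral_proj[OF simple])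
next
  case (Suc r)
  define C where "C = label_dft n f j * label_dft n f j0 ^ r / of_nat n ^ (r + 1)"
  have "dft n (\<lambda>y. of_bool (f y) * obs_op \<gamma> n f (proj_chain \<gamma> n j j0 r) (\<lambda>_. 1) y) (j + int (Suc r) * j0)
      = dft n (\<lambda>y. C * of_bool (f y) * unit_root n ((j + int r * j0) * y)) (j + int (Suc r) * j0)"
    unfolding dft_def by (intro sum.cong refl) (simp add: Suc.IH C_def)
  also have "\<dots> = dft n (\<lambda>y. C * of_bool (f y)) j0"
    by (subst dft_modulate) (simp add: algebra_simps)
  also have "\<dots> = C * label_dft n f j0"
    unfolding dft_def sum_distrib_left by (simp only: mult.assoc)
  finally show ?case
    using Suc.prems by (simp add: poly_op_spectral_proj[OF simple] C_def field_simps)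
qed

lemma label_moment_proj_chain:
  assumes "simple_spectrum \<gamma> n"
  shows "label_moment \<gamma> n f (proj_chain \<gamma> n j j0 r) =
    label_dft n f j * label_dft n f j0 ^ r * label_dft n f (- (j + int r * j0)) / of_nat n ^ (r + 1)"
proof -
  have "label_moment \<gamma> n f (proj_chain \<gamma> n j j0 r) = label_dft n f j * label_dft n f j0 ^ r / of_nat n ^ (r + 1)
      * (\<Sum>x\<in>{0..<int n}. of_bool (f x) * unit_root n ((j + int r * j0) * x))"
    unfolding label_moment_def sum_distrib_left
    by (intro sum.cong refl) (simp add: obs_op_proj_chain[OF assms])
  also have "(\<Sum>x\<in>{0..<int n}. of_bool (f x) * unit_root n ((j + int r * j0) * x)) = label_dft n f (- (j + int r * j0))"
    unfolding dft_def by (intro sum.cong refl) (simp add: algebra_simps)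
  finally show ?thesis by simp
qed

lemma prime_mod_inverse_exists:
  assumes "prime n" "\<not> int n dvd a"
  shows "\<exists>u. (u * a) mod int n = 1"
proof -
  have "coprime a (int n)"
    using assms prime_imp_coprime[of "int n" a] by (simp add: coprime_commute)
  then obtain u v where "u * a + v * int n = 1" using bezout_int[of a "int n"] by auto
  then have "(u * a) mod int n = 1 mod int n" by (metis mod_mult_self1 mult.commute)
  then show ?thesis using assms(1) prime_gt_1_nat by auto
qed

text \<open>Phase recovery from the triple products \<open>F(j) F(j\<^sub>0)\<^sup>r F(-(j + r j\<^sub>0))\<close>: choosing \<open>r\<close>
  with \<open>j + r j\<^sub>0 \<equiv> 0\<close> (possible as \<open>n\<close> is prime) expresses \<open>F\<^sub>2 j / F\<^sub>1 j\<close> as a power of the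
  \<open>n\<close>-th root of unity \<open>F\<^sub>1 j\<^sub>0 / F\<^sub>2 j\<^sub>0\<close>, with exponent linear in \<open>j\<close>.\<close>

lemma phase_from_triple_products:
  fixes F1 F2 :: "int \<Rightarrow> complex"
  assumes n: "prime n"
    and periodic: "\<And>k. F1 (k mod int n) = F1 k" "\<And>k. F2 (k mod int n) = F2 k"
    and triple: "\<And>j j0 r. F1 j * F1 j0 ^ r * F1 (- (j + int r * j0)) = F2 j * F2 j0 ^ r * F2 (- (j + int r * j0))"
    and F0: "F1 0 = F2 0" "F1 0 \<noteq> 0"
    and j0: "\<not> int n dvd j0" "F1 j0 \<noteq> 0 \<or> F2 j0 \<noteq> 0"
  shows "\<exists>l. \<forall>j. F2 j = F1 j * unit_root n (l * j)"
proof -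
  have n1: "n \<ge> 1" using prime_gt_1_nat[OF n] by simp
  have cancel: "F1 j * F1 j0 ^ r = F2 j * F2 j0 ^ r" if "int n dvd j + int r * j0" for j r
  proof -
    have "- (j + int r * j0) mod int n = 0" using that by (simp only: dvd_minus_iff dvd_eq_mod_eq_0[symmetric])
    then have "F1 (- (j + int r * j0)) = F1 0" "F2 (- (j + int r * j0)) = F2 0"
      using periodic by metis+
    then show ?thesis using triple[of j j0 r] F0 by simp
  qed
  have "int n dvd j0 + int (n - 1) * j0" using n1 by (simp add: of_nat_diff algebra_simps)
  from cancel[OF this] have "F1 j0 ^ n = F2 j0 ^ n"
    using n1 by (metis power_Suc Suc_diff_1 less_le_trans zero_less_one)
  with j0(2) have F1_j0: "F1 j0 \<noteq> 0" and F2_j0: "F2 j0 \<noteq> 0"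
    using n1 power_eq_0_iff[of "F1 j0" n] power_eq_0_iff[of "F2 j0" n] by auto
  define c where "c = F1 j0 / F2 j0"
  have "c ^ n = 1" using \<open>F1 j0 ^ n = F2 j0 ^ n\<close> F2_j0 by (simp add: c_def power_divide)
  then obtain m where c: "c = unit_root n m" using root_of_unity_eq_unit_root[OF n1] by blast
  obtain u where u: "(u * j0) mod int n = 1" using prime_mod_inverse_exists[OF n j0(1)] by blast
  have "F2 j = F1 j * unit_root n (- (m * u) * j)" for j
  proof -
    define r where "r = nat ((- (j * u)) mod int n)"
    have r: "int r = (- (j * u)) mod int n" using n1 by (simp add: r_def)
    have "(j + int r * j0) mod int n = (j + (- (j * u)) * j0) mod int n"
      by (rule mod_add_cong[OF refl]) (unfold r, rule mod_mult_left_eq)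
    also have "\<dots> = (j - j * (u * j0)) mod int n" by (simp add: algebra_simps)
    also have "\<dots> = (j - j * ((u * j0) mod int n)) mod int n"
      by (rule mod_diff_cong[OF refl]) (rule mod_mult_right_eq[symmetric])
    also have "\<dots> = 0" using u by simp
    finally have "F1 j * F1 j0 ^ r = F2 j * F2 j0 ^ r" by (intro cancel) (simp add: dvd_eq_mod_eq_0)
    then have "F2 j = F1 j * c ^ r" using F2_j0 by (simp add: c_def power_divide field_simps)
    also have "c ^ r = unit_root n (- (m * u) * j)"
      unfolding c unit_root_power
    proof (rule unit_root_cong[OF n1])
      have "(m * int r) mod int n = (m * (- (j * u))) mod int n" unfolding r by (rule mod_mult_right_eq)
      then show "(m * int r) mod int n = (- (m * u) * j) mod int n" by (simp add: algebra_simps)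
    qed
    finally show ?thesis .
  qed
  then show ?thesis by blast
qed


lemma label_dft_0: "label_dft n f 0 = of_nat (card {x\<in>{0..<int n}. f x})"
  by (simp add: dft_0 of_bool_def sum.If_cases Int_def conj_commute)

lemma label_dft_phase:
  assumes n: "prime n"
    and triple: "\<And>j j0 r. label_dft n f1 j * label_dft n f1 j0 ^ r * label_dft n f1 (- (j + int r * j0))
      = label_dft n f2 j * label_dft n f2 j0 ^ r * label_dft n f2 (- (j + int r * j0))"
    and F0: "label_dft n f1 0 = label_dft n f2 0"
  shows "\<exists>l. \<forall>j. label_dft n f2 j = label_dft n f1 j * unit_root n (l * j)"
proof -
  have n1: "n \<ge> 1" using prime_gt_1_nat[OF n] by simp
  have periodic: "label_dft n f (k mod int n) = label_dft n f k" for f k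
    using n1 by (intro dft_cong_freq) auto
  consider "label_dft n f1 0 = 0"
    | "label_dft n f1 0 \<noteq> 0" "\<And>j. \<not> int n dvd j \<Longrightarrow> label_dft n f1 j = 0 \<and> label_dft n f2 j = 0"
    | j0 where "label_dft n f1 0 \<noteq> 0" "\<not> int n dvd j0" "label_dft n f1 j0 \<noteq> 0 \<or> label_dft n f2 j0 \<noteq> 0"
    by blast
  then show ?thesis
  proof cases
    case 1
    then have "card {x\<in>{0..<int n}. f1 x} = 0" "card {x\<in>{0..<int n}. f2 x} = 0"
      using F0 by (simp_all add: label_dft_0)
    moreover have "finite {x\<in>{0..<int n}. f x}" for f :: "int \<Rightarrow> bool"
      by (rule finite_subset[of _ "{0..<int n}"]) auto
    ultimately have "{x\<in>{0..<int n}. f1 x} = {}" "{x\<in>{0..<int n}. f2 x} = {}"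
      by (simp_all only: card_0_eq)
    then have "\<not> f1 x" "\<not> f2 x" if "x \<in> {0..<int n}" for x
      using that by blast+
    then have "label_dft n f1 j = 0" "label_dft n f2 j = 0" for j
      by (auto simp: dft_def intro!: sum.neutral)
    then show ?thesis by auto
  next
    case 2
    have "label_dft n f2 j = label_dft n f1 j" for j
    proof (cases "int n dvd j")
      case True
      then show ?thesis using periodic[of _ j] F0 by (metis dvd_eq_mod_eq_0)
    qed (use 2 in auto)
    then show ?thesis by (intro exI[of _ 0]) simp
  next
    case 3
    then show ?thesis using phase_from_triple_products[OF n periodic periodic triple F0] by blast
  qed
qed

lemma proj_chain_coeff_0: "simple_spectrum \<gamma> n \<Longrightarrow> \<forall>q\<in>set (proj_chain \<gamma> n j j0 r). coeff q 0 = 0"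
  by (induction r) (simp_all add: spectral_proj(1))

theorem simple_spectrum_imp_reconstructive:
  assumes simple: "simple_spectrum \<gamma> n" and n: "prime n"
  shows "reconstructive \<gamma> n"
  unfolding reconstructive_def
proof (intro allI impI)
  fix f1 f2 :: "int \<Rightarrow> bool"
  assume same: "same_label_distr \<gamma> n f1 f2"
  have n1: "n \<ge> 1" using simple by (simp add: simple_spectrum_def)
  have moments: "label_moment \<gamma> n f1 qs = label_moment \<gamma> n f2 qs" if "\<forall>q\<in>set qs. coeff q 0 = 0" for qs
    using label_moment_eq_if_same_label_distr[OF same n1 that] .
  have "label_dft n f1 j * label_dft n f1 j0 ^ r * label_dft n f1 (- (j + int r * j0))
      = label_dft n f2 j * label_dft n f2 j0 ^ r * label_dft n f2 (- (j + int r * j0))" for j j0 r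
    using moments[OF proj_chain_coeff_0[OF simple, of j j0 r]] n1
    by (simp add: label_moment_proj_chain[OF simple])
  moreover have "label_dft n f1 0 = label_dft n f2 0"
    using moments[of "[]"] by (simp add: label_moment_def dft_0)
  ultimately obtain l where "\<And>j. label_dft n f2 j = label_dft n f1 j * unit_root n (l * j)"
    using label_dft_phase[OF n] by blast
  then have shift: "f2 y = f1 ((y + l) mod int n)" if "y \<in> {0..<int n}" for y
    using dft_eq_modulated_imp_shift[OF n1 _ that, where g = "\<lambda>x. of_bool (f2 x)" and h = "\<lambda>x. of_bool (f1 x)" and l = l]
    by (simp add: of_bool_def split: if_splits)
  have "f1 k = f2 ((k + - l) mod int n)" if "k \<in> {0..<int n}" for k
    using shift[of "(k + - l) mod int n"] that n1 by (simp add: mod_add_left_eq)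
  then show "\<exists>l. \<forall>k\<in>{0..<int n}. f1 k = f2 ((k + l) mod int n)" by blast
qed

section \<open>Simple spectrum for large primes\<close>

text \<open>The integer polynomial whose value at \<open>\<omega> = unit_root n 1\<close> is \<open>\<Sum>_a c(a) \<omega>^(j a)\<close>, with
  exponents reduced mod \<open>n\<close> so that its degree is below \<open>n\<close>.\<close>

definition freq_poly :: "(int \<Rightarrow> int) \<Rightarrow> int set \<Rightarrow> nat \<Rightarrow> int \<Rightarrow> int poly" where
  "freq_poly c S n j = (\<Sum>a\<in>S. monom (c a) (nat ((j * a) mod int n)))"

lemma coeff_freq_poly:
  "coeff (freq_poly c S n j) k = (\<Sum>a\<in>S. if nat ((j * a) mod int n) = k then c a else 0)"
  unfolding freq_poly_def coeff_sum by (intro sum.cong refl) (auto simp: coeff_monom)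

lemma degree_freq_poly:
  assumes "finite S" "n \<ge> 1"
  shows "degree (freq_poly c S n j) < n"
proof -
  have "degree (freq_poly c S n j) \<le> n - 1"
    unfolding freq_poly_def
  proof (rule degree_sum_le[OF assms(1)])
    fix a
    have "nat ((j * a) mod int n) \<le> n - 1" using assms(2) by (simp add: nat_le_iff of_nat_diff)
    then show "degree (monom (c a) (nat ((j * a) mod int n))) \<le> n - 1"
      using degree_monom_le le_trans by blast
  qed
  then show ?thesis using assms(2) by simp
qed

lemma poly_freq_poly:
  assumes "n \<ge> 1"
  shows "poly (map_poly of_int (freq_poly c S n j)) (unit_root n 1) = (\<Sum>a\<in>S. of_int (c a) * unit_root n (j * a))"
proof -
  have "map_poly of_int (freq_poly c S n j) = (\<Sum>a\<in>S. map_poly of_int (monom (c a) (nat ((j * a) mod int n))) :: complex poly)"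
    unfolding freq_poly_def by (rule poly_eqI) (simp add: coeff_map_poly coeff_sum)
  then show ?thesis
    using assms by (simp add: poly_sum map_poly_monom poly_monom unit_root_power unit_root_mod)
qed

lemma nonzero_coeffs_freq_poly:
  "{k. coeff (freq_poly c S n j) k \<noteq> 0} \<subseteq> (\<lambda>a. nat ((j * a) mod int n)) ` S"
proof
  fix k assume "k \<in> {k. coeff (freq_poly c S n j) k \<noteq> 0}"
  then have "(\<Sum>a\<in>S. if nat ((j * a) mod int n) = k then c a else 0) \<noteq> 0" by (simp add: coeff_freq_poly)
  moreover have "(\<Sum>a\<in>S. if nat ((j * a) mod int n) = k then c a else 0) = 0"
    if "k \<notin> (\<lambda>a. nat ((j * a) mod int n)) ` S"
    using that by (intro sum.neutral) auto
  ultimately show "k \<in> (\<lambda>a. nat ((j * a) mod int n)) ` S" by blast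
qed

lemma coeff_freq_poly_ge:
  assumes "finite S" "\<forall>a\<in>S. c a > 0" "a \<in> S"
  shows "coeff (freq_poly c S n j) (nat ((j * a) mod int n)) \<ge> c a"
proof -
  have "c a = (if nat ((j * a) mod int n) = nat ((j * a) mod int n) then c a else 0)" by simp
  also have "\<dots> \<le> (\<Sum>b\<in>S. if nat ((j * b) mod int n) = nat ((j * a) mod int n) then c b else 0)"
    using assms by (intro member_le_sum) (auto simp: less_imp_le)
  finally show ?thesis by (simp add: coeff_freq_poly)
qed


lemma card_nonzero_coeffs_freq_poly:
  assumes "finite S"
  shows "card {k. coeff (freq_poly c S n j) k \<noteq> 0} \<le> card S"
  using card_mono[OF finite_imageI[OF assms] nonzero_coeffs_freq_poly[of c S n j]]
    card_image_le[OF assms, of "\<lambda>a. nat ((j * a) mod int n)"] by linarith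

lemma freq_sum_nonzero:
  assumes n: "prime n" and S: "finite S" "S \<noteq> {}" "card S < n" and pos: "\<forall>a\<in>S. c a > 0"
  shows "(\<Sum>a\<in>S. of_int (c a) * unit_root n (j * a)) \<noteq> 0"
proof
  have n1: "n \<ge> 1" using prime_gt_1_nat[OF n] by simp
  assume "(\<Sum>a\<in>S. of_int (c a) * unit_root n (j * a)) = 0"
  then have "freq_poly c S n j = 0"
    using card_nonzero_coeffs_freq_poly[OF S(1), of c n j] S(3)
    by (intro sparse_int_poly_root_of_unity_eq_0[OF n degree_freq_poly[OF S(1) n1]])
      (simp_all add: poly_freq_poly[OF n1])
  moreover obtain a where "a \<in> S" using S(2) by blast
  ultimately show False using coeff_freq_poly_ge[OF S(1) pos, of a n j] pos by auto
qed

lemma freq_sum_eq_imp_freq_poly_eq: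
  assumes n: "prime n" and S: "finite S" "2 * card S < n"
    and eq: "(\<Sum>a\<in>S. of_int (c a) * unit_root n (j * a)) = (\<Sum>a\<in>S. of_int (c a) * unit_root n (j' * a))"
  shows "freq_poly c S n j = freq_poly c S n j'"
proof -
  have n1: "n \<ge> 1" using prime_gt_1_nat[OF n] by simp
  define D where "D = freq_poly c S n j - freq_poly c S n j'"
  have "degree (freq_poly c S n k) \<le> n - 1" for k using degree_freq_poly[OF S(1) n1, of c k] by simp
  then have "degree D \<le> n - 1" unfolding D_def by (intro degree_diff_le)
  then have deg: "degree D < n" using n1 by simp
  have "map_poly of_int D = map_poly of_int (freq_poly c S n j) - (map_poly of_int (freq_poly c S n j') :: complex poly)"
    by (rule poly_eqI) (simp add: D_def coeff_map_poly)
  then have root: "poly (map_poly of_int D) (unit_root n 1) = 0"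
    using eq by (simp add: poly_freq_poly[OF n1])
  have fin: "finite {k. coeff (freq_poly c S n i) k \<noteq> 0}" for i
    using finite_subset[OF nonzero_coeffs_freq_poly finite_imageI[OF S(1)]] .
  have "card {k. coeff D k \<noteq> 0}
      \<le> card ({k. coeff (freq_poly c S n j) k \<noteq> 0} \<union> {k. coeff (freq_poly c S n j') k \<noteq> 0})"
    using fin by (intro card_mono) (auto simp: D_def)
  also have "\<dots> \<le> card S + card S"
    using card_Un_le card_nonzero_coeffs_freq_poly[OF S(1)] by (metis add_mono le_trans)
  finally have "D = 0"
    using S(2) by (intro sparse_int_poly_root_of_unity_eq_0[OF n deg root]) auto
  then show ?thesis by (simp add: D_def)
qed

lemma eq_0_if_dvd_abs_less: "int n dvd x \<Longrightarrow> \<bar>x\<bar> < int n \<Longrightarrow> x = 0"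
  using dvd_imp_le_int[of x "int n"] by auto

text \<open>For \<open>n\<close> large compared with the support, the residues \<open>j a mod n\<close> (\<open>a \<in> S\<close>) determine
  \<open>j\<close> up to sign, and a sign change forces the weights to be symmetric.\<close>

context
  fixes c :: "int \<Rightarrow> int" and S :: "int set" and n :: nat and B :: int
  assumes n: "prime n" and fin: "finite S" and pos: "\<forall>a\<in>S. c a > 0"
    and bound: "\<forall>a\<in>S. \<bar>a\<bar> \<le> B" and B: "0 \<le> B" and large: "2 * B * B + 2 * B < int n"
begin

lemma n_ge_1: "n \<ge> 1"
  using prime_gt_1_nat[OF n] by simp

lemma prime_dvd_mult: "int n dvd x * y \<Longrightarrow> int n dvd x \<or> int n dvd y"
  using n by (simp add: prime_dvd_mult_iff)

lemma dvd_small_eq_0: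
  assumes "int n dvd x" "\<bar>x\<bar> \<le> 2 * B * B + 2 * B"
  shows "x = 0"
  using assms large by (intro eq_0_if_dvd_abs_less) auto

lemma two_B_sq_nonneg: "0 \<le> 2 * B * B"
  using B by simp

lemma abs_support_le:
  assumes "a \<in> S" shows "\<bar>a\<bar> \<le> 2 * B * B + 2 * B"
proof -
  have "\<bar>a\<bar> \<le> B" using bound assms by auto
  then show ?thesis using two_B_sq_nonneg B by linarith
qed

lemma abs_add_support_le:
  assumes "a \<in> S" "b \<in> S" shows "\<bar>a + b\<bar> \<le> 2 * B * B + 2 * B"
proof -
  have "\<bar>a\<bar> \<le> B" "\<bar>b\<bar> \<le> B" using bound assms by auto
  then show ?thesis using two_B_sq_nonneg by linarith
qed

lemma abs_diff_support_le:
  assumes "a \<in> S" "b \<in> S" shows "\<bar>a - b\<bar> \<le> 2 * B * B + 2 * B"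
proof -
  have "\<bar>a\<bar> \<le> B" "\<bar>b\<bar> \<le> B" using bound assms by auto
  then show ?thesis using two_B_sq_nonneg by linarith
qed

lemma freq_poly_eq_match:
  assumes eq: "freq_poly c S n j = freq_poly c S n j'" and a: "a \<in> S"
  shows "\<exists>b\<in>S. (j * a) mod int n = (j' * b) mod int n"
proof -
  define k where "k = nat ((j * a) mod int n)"
  have "coeff (freq_poly c S n j') k \<noteq> 0"
    using coeff_freq_poly_ge[OF fin pos a, of n j] pos a unfolding eq k_def by force
  then obtain b where "b \<in> S" "nat ((j' * b) mod int n) = k"
    using nonzero_coeffs_freq_poly by blast
  moreover have "0 \<le> (i * x) mod int n" for i x using n_ge_1 by simp
  ultimately show ?thesis unfolding k_def by (metis nat_eq_iff2)
qed

lemma coeff_freq_poly_unique: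
  assumes j: "\<not> int n dvd j" and a: "a \<in> S"
  shows "coeff (freq_poly c S n j) (nat ((j * a) mod int n)) = c a"
proof -
  have "nat ((j * b) mod int n) = nat ((j * a) mod int n) \<longleftrightarrow> b = a" if b: "b \<in> S" for b
  proof
    assume "nat ((j * b) mod int n) = nat ((j * a) mod int n)"
    then have "(j * b) mod int n = (j * a) mod int n" using n_ge_1 by (simp add: eq_nat_nat_iff)
    then have "int n dvd j * (b - a)" by (simp add: mod_eq_dvd_iff right_diff_distrib)
    then have "int n dvd b - a" using prime_dvd_mult j by blast
    with abs_diff_support_le[OF b a] show "b = a" using dvd_small_eq_0 by fastforce
  qed simp
  then have "coeff (freq_poly c S n j) (nat ((j * a) mod int n)) = (\<Sum>b\<in>S. if b = a then c b else 0)"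
    unfolding coeff_freq_poly by (intro sum.cong refl) simp
  then show ?thesis using a fin by simp
qed

lemma freq_poly_eq_zero_freq:
  assumes eq: "freq_poly c S n j = freq_poly c S n j'" and j: "int n dvd j"
    and a0: "a0 \<in> S" "a0 \<noteq> 0"
  shows "int n dvd j'"
proof -
  obtain b where "(j' * a0) mod int n = (j * b) mod int n"
    using freq_poly_eq_match[OF eq[symmetric] a0(1)] by blast
  then have "int n dvd j' * a0" using j by (simp add: mod_eq_0_iff_dvd)
  moreover have "\<not> int n dvd a0" using dvd_small_eq_0 abs_support_le a0 by blast
  ultimately show ?thesis using prime_dvd_mult by blast
qed

text \<open>Matching the largest support element \<open>a\<^sub>0\<close> on both sides gives \<open>a\<^sub>0\<^sup>2 \<equiv> a\<^sub>1 a\<^sub>m\<close> with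
  \<open>|a\<^sub>1|, |a\<^sub>m| \<le> |a\<^sub>0|\<close>; for \<open>n > 2B\<^sup>2\<close> this congruence is an equation, so \<open>a\<^sub>1 = \<plusminus>a\<^sub>0\<close>.\<close>

lemma freq_poly_eq_sign:
  assumes eq: "freq_poly c S n j = freq_poly c S n j'"
    and j: "\<not> int n dvd j" "\<not> int n dvd j'"
    and a0: "a0 \<in> S" "a0 \<noteq> 0" and max: "\<forall>a\<in>S. \<bar>a\<bar> \<le> \<bar>a0\<bar>"
  shows "int n dvd j - j' \<or> int n dvd j + j'"
proof -
  obtain a1 where a1: "a1 \<in> S" "(j * a0) mod int n = (j' * a1) mod int n"
    using freq_poly_eq_match[OF eq a0(1)] by blast
  obtain am where am: "am \<in> S" "(j' * a0) mod int n = (j * am) mod int n"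
    using freq_poly_eq_match[OF eq[symmetric] a0(1)] by blast
  have "((j * a0) * (j' * a0)) mod int n = ((j' * a1) * (j * am)) mod int n"
    by (rule mod_mult_cong[OF a1(2) am(2)])
  then have "int n dvd j * (j' * (a0 * a0 - a1 * am))"
    by (simp add: mod_eq_dvd_iff algebra_simps)
  then have "int n dvd a0 * a0 - a1 * am" using prime_dvd_mult j by blast
  moreover have "\<bar>a0 * a0 - a1 * am\<bar> \<le> 2 * B * B + 2 * B"
  proof -
    have "\<bar>a0\<bar> \<le> B" "\<bar>a1\<bar> \<le> B" "\<bar>am\<bar> \<le> B" using bound a0 a1 am by auto
    then have "\<bar>a0\<bar> * \<bar>a0\<bar> \<le> B * B" "\<bar>a1\<bar> * \<bar>am\<bar> \<le> B * B"
      by (intro mult_mono; simp)+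
    moreover have "\<bar>a0 * a0 - a1 * am\<bar> \<le> \<bar>a0\<bar> * \<bar>a0\<bar> + \<bar>a1\<bar> * \<bar>am\<bar>"
      using abs_triangle_ineq4[of "a0 * a0" "a1 * am"] by (simp add: abs_mult)
    ultimately show ?thesis using bound a0 by force
  qed
  ultimately have "\<bar>a0\<bar> * \<bar>a0\<bar> = \<bar>a1\<bar> * \<bar>am\<bar>"
    using dvd_small_eq_0 by (metis abs_mult eq_iff_diff_eq_0)
  also have "\<dots> \<le> \<bar>a1\<bar> * \<bar>a0\<bar>" using max am(1) by (simp add: mult_left_mono)
  finally have "\<bar>a0\<bar> * \<bar>a0\<bar> \<le> \<bar>a1\<bar> * \<bar>a0\<bar>" .
  then have "\<bar>a0\<bar> \<le> \<bar>a1\<bar>" by (rule mult_right_le_imp_le) (simp add: a0(2))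
  then have "a1 = a0 \<or> a1 = - a0" using max a1(1) by fastforce
  moreover have a0_n: "\<not> int n dvd a0" using dvd_small_eq_0 abs_support_le a0 by blast
  ultimately show ?thesis
  proof (elim disjE)
    assume "a1 = a0"
    then have "int n dvd (j - j') * a0" using a1(2) by (simp add: mod_eq_dvd_iff algebra_simps)
    then show ?thesis using prime_dvd_mult a0_n by blast
  next
    assume "a1 = - a0"
    then have "int n dvd (j + j') * a0" using a1(2) by (simp add: mod_eq_dvd_iff algebra_simps)
    then show ?thesis using prime_dvd_mult a0_n by blast
  qed
qed

lemma freq_poly_eq_opposite_imp_symmetric:
  assumes eq: "freq_poly c S n j = freq_poly c S n j'"
    and j: "\<not> int n dvd j" "\<not> int n dvd j'" and opp: "int n dvd j + j'" and a: "a \<in> S"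
  shows "- a \<in> S \<and> c (- a) = c a"
proof -
  obtain b where b: "b \<in> S" "(j * a) mod int n = (j' * b) mod int n"
    using freq_poly_eq_match[OF eq a] by blast
  have "int n dvd (j * a - j' * b) + (j + j') * b"
    using b(2) opp by (simp add: mod_eq_dvd_iff)
  then have "int n dvd j * (a + b)" by (simp add: algebra_simps)
  then have "int n dvd a + b" using prime_dvd_mult j by blast
  then have "b = - a" using dvd_small_eq_0 abs_add_support_le[OF a b(1)] by fastforce
  moreover have "c a = c b"
    using coeff_freq_poly_unique[OF j(1) a] coeff_freq_poly_unique[OF j(2) b(1)] b(2) eq by simp
  ultimately show ?thesis using b(1) by simp
qed

lemma freq_poly_eq_imp_eq_or_symmetric:
  assumes eq: "freq_poly c S n j = freq_poly c S n j'"
    and j: "j \<in> {0..<int n}" "j' \<in> {0..<int n}"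
    and a0: "a0 \<in> S" "a0 \<noteq> 0" and max: "\<forall>a\<in>S. \<bar>a\<bar> \<le> \<bar>a0\<bar>"
  shows "j = j' \<or> (\<forall>a\<in>S. - a \<in> S \<and> c (- a) = c a)"
proof -
  have residue: "int n dvd k \<longleftrightarrow> k = 0" if "k \<in> {0..<int n}" for k
    using that by (auto dest: zdvd_imp_le)
  have "int n dvd j \<longleftrightarrow> int n dvd j'"
    using freq_poly_eq_zero_freq[OF eq _ a0] freq_poly_eq_zero_freq[OF eq[symmetric] _ a0] by blast
  moreover have "j = j'" if "int n dvd j - j'"
    using eq_0_if_dvd_abs_less[OF that] j by auto
  ultimately show ?thesis
    using freq_poly_eq_sign[OF eq _ _ a0 max] freq_poly_eq_opposite_imp_symmetric[OF eq] residue j by blast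
qed

end

lemma rationals_common_denominator:
  assumes "finite A" "\<forall>a\<in>A. (x a :: real) \<in> \<rat>"
  shows "\<exists>Q::int. Q > 0 \<and> (\<forall>a\<in>A. of_int Q * x a \<in> \<int>)"
  using assms
proof (induction A rule: finite_induct)
  case (insert b A)
  then obtain Q where Q: "Q > 0" "\<forall>a\<in>A. of_int Q * x a \<in> \<int>" by auto
  obtain p q where pq: "q > 0" "x b = of_int p / of_int q" using insert.prems by (auto elim: Rats_cases')
  have "of_int (Q * q) * x b \<in> \<int>" using pq by simp
  moreover have "of_int (Q * q) * x a \<in> \<int>" if "a \<in> A" for a
  proof -
    have "of_int (Q * q) * x a = of_int q * (of_int Q * x a)" by simp
    then show ?thesis using Q that by (metis Ints_mult Ints_of_int)
  qed
  ultimately have "\<forall>a\<in>insert b A. of_int (Q * q) * x a \<in> \<int>" by blast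
  then show ?case using Q pq by (intro exI[of _ "Q * q"]) simp
qed (intro exI[of _ 1], simp)

lemma walk_eigenvalue_eq_sum_supp:
  assumes n: "n \<ge> 1" and fin: "finite (supp_dist \<gamma>)"
  shows "walk_eigenvalue \<gamma> n j = (\<Sum>a\<in>supp_dist \<gamma>. of_real (\<gamma> a) * unit_root n (j * a))"
proof -
  let ?S = "supp_dist \<gamma>"
  have "walk_eigenvalue \<gamma> n j = (\<Sum>d\<in>{0..<int n}. \<Sum>a\<in>?S. if a mod int n = d then of_real (\<gamma> a) * unit_root n (j * d) else 0)"
    unfolding walk_eigenvalue_def gamma_mod_def
    by (intro sum.cong refl) (auto simp: sum.inter_filter[OF fin] of_real_sum sum_distrib_right intro!: sum.cong)
  also have "\<dots> = (\<Sum>a\<in>?S. of_real (\<gamma> a) * unit_root n (j * (a mod int n)))"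
    using n by (subst sum.swap) (simp add: sum.delta)
  also have "\<dots> = (\<Sum>a\<in>?S. of_real (\<gamma> a) * unit_root n (j * a))"
    by (intro sum.cong refl arg_cong2[where f = "(*)"] unit_root_cong[OF n]) (simp add: mod_mult_right_eq)
  finally show ?thesis .
qed


lemma positive_rationals_integer_multiple:
  fixes w :: "int \<Rightarrow> real"
  assumes "finite S" "\<forall>a\<in>S. 0 < w a \<and> w a \<in> \<rat>"
  obtains Q :: int and c :: "int \<Rightarrow> int"
  where "Q > 0" "\<forall>a\<in>S. c a > 0 \<and> of_int (c a) = of_int Q * w a"
proof -
  obtain Q :: int where Q: "Q > 0" "\<forall>a\<in>S. of_int Q * w a \<in> \<int>"
    using rationals_common_denominator[of S w] assms by blast
  have "\<lfloor>of_int Q * w a\<rfloor> > 0 \<and> of_int \<lfloor>of_int Q * w a\<rfloor> = of_int Q * w a" if a: "a \<in> S" for a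
  proof -
    have eq: "of_int \<lfloor>of_int Q * w a\<rfloor> = of_int Q * w a"
      using Q(2) a by (metis Ints_cases floor_of_int)
    have "(0::real) < of_int Q * w a" using Q(1) assms(2) a by simp
    then have "(0::real) < of_int \<lfloor>of_int Q * w a\<rfloor>" by (simp only: eq)
    then have "0 < \<lfloor>of_int Q * w a\<rfloor>" by (simp only: of_int_0_less_iff)
    with eq show ?thesis by blast
  qed
  with Q(1) show ?thesis by (intro that[of Q "\<lambda>a. \<lfloor>of_int Q * w a\<rfloor>"]) blast+
qed

lemma symmetric_if_scaled_weights_symmetric:
  fixes \<gamma> :: "int \<Rightarrow> real"
  assumes Q: "Q \<noteq> 0" and c: "\<forall>a\<in>supp_dist \<gamma>. of_int (c a) = of_int Q * \<gamma> a"
    and sym: "\<forall>a\<in>supp_dist \<gamma>. - a \<in> supp_dist \<gamma> \<and> c (- a) = c a"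
  shows "\<gamma> (- a) = \<gamma> a"
proof (cases "a \<in> supp_dist \<gamma>")
  case True
  then have "of_int Q * \<gamma> (- a) = of_int Q * \<gamma> a" using sym c by metis
  then show ?thesis using Q by simp
next
  case False
  then have "- a \<notin> supp_dist \<gamma>" using sym by force
  with False show ?thesis by (simp add: supp_dist_def)
qed

lemma simple_spectrum_of_integer_weights:
  fixes \<gamma> :: "int \<Rightarrow> real" and c :: "int \<Rightarrow> int"
  defines "S \<equiv> supp_dist \<gamma>"
  assumes n: "prime n" and fin: "finite S"
    and c: "\<forall>a\<in>S. c a > 0 \<and> of_int (c a) = of_int Q * \<gamma> a"
    and asym: "\<not> (\<forall>a\<in>S. - a \<in> S \<and> c (- a) = c a)"
    and a0: "a0 \<in> S" and max: "\<forall>a\<in>S. \<bar>a\<bar> \<le> \<bar>a0\<bar>"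
    and large: "2 * \<bar>a0\<bar> * \<bar>a0\<bar> + 2 * \<bar>a0\<bar> < int n" "2 * card S < n"
  shows "simple_spectrum \<gamma> n"
proof -
  have n1: "n \<ge> 1" using prime_gt_1_nat[OF n] by simp
  have "a0 \<noteq> 0" using asym max by force
  have c_complex: "(of_int (c a) :: complex) = of_int Q * of_real (\<gamma> a)" if "a \<in> S" for a
  proof -
    have "(of_int (c a) :: complex) = of_real (of_int (c a))" by simp
    also have "\<dots> = of_real (of_int Q * \<gamma> a)" using c that by simp
    finally show ?thesis by simp
  qed
  have eigenvalue: "of_int Q * walk_eigenvalue \<gamma> n j = (\<Sum>a\<in>S. of_int (c a) * unit_root n (j * a))" for j
    unfolding walk_eigenvalue_eq_sum_supp[OF n1 fin[unfolded S_def]] S_def[symmetric] sum_distrib_left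
    by (intro sum.cong refl) (simp add: c_complex mult.assoc)
  have "S \<noteq> {}" "card S < n" "\<forall>a\<in>S. c a > 0" using a0 large(2) c by auto
  then have "walk_eigenvalue \<gamma> n j \<noteq> 0" for j
    using freq_sum_nonzero[OF n fin, of c j] eigenvalue[of j] by auto
  moreover have "inj_on (walk_eigenvalue \<gamma> n) {0..<int n}"
  proof (rule inj_onI)
    fix j j' assume j: "j \<in> {0..<int n}" "j' \<in> {0..<int n}"
      and "walk_eigenvalue \<gamma> n j = walk_eigenvalue \<gamma> n j'"
    then have "freq_poly c S n j = freq_poly c S n j'"
      using eigenvalue[of j] eigenvalue[of j'] large(2) by (intro freq_sum_eq_imp_freq_poly_eq[OF n fin]) auto
    then show "j = j'"
      using freq_poly_eq_imp_eq_or_symmetric[OF n fin \<open>\<forall>a\<in>S. c a > 0\<close> max _ large(1) _ j a0 \<open>a0 \<noteq> 0\<close> max]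
        asym by simp
  qed
  ultimately show ?thesis using n1 by (simp add: simple_spectrum_def)
qed

theorem simple_spectrum_for_large_primes:
  fixes \<gamma> :: "int \<Rightarrow> real"
  assumes nonneg: "\<forall>a. 0 \<le> \<gamma> a" and fin: "finite (supp_dist \<gamma>)"
    and total: "(\<Sum>a\<in>supp_dist \<gamma>. \<gamma> a) = 1" and rational: "\<forall>a. \<gamma> a \<in> \<rat>"
    and asym: "\<not> (\<forall>a. \<gamma> a = \<gamma> (- a))"
  shows "\<exists>N. \<forall>n. prime n \<and> n > N \<longrightarrow> simple_spectrum \<gamma> n"
proof -
  define S where "S = supp_dist \<gamma>"
  have S: "finite S" "S \<noteq> {}" and in_S: "a \<in> S \<longleftrightarrow> \<gamma> a \<noteq> 0" for a
    using fin total by (auto simp: S_def supp_dist_def simp del: Collect_empty_eq)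
  obtain Q c where Q: "Q > 0" and c: "\<forall>a\<in>S. c a > 0 \<and> of_int (c a) = of_int Q * \<gamma> a"
    using positive_rationals_integer_multiple[OF S(1), of \<gamma>] nonneg rational in_S
    by (metis order_le_less)
  have asym_c: "\<not> (\<forall>a\<in>S. - a \<in> S \<and> c (- a) = c a)"
  proof
    assume "\<forall>a\<in>S. - a \<in> S \<and> c (- a) = c a"
    then have "\<gamma> (- a) = \<gamma> a" for a
      using symmetric_if_scaled_weights_symmetric[of Q \<gamma> c a] Q c by (simp add: S_def)
    with asym show False by simp
  qed
  obtain a0 where a0: "a0 \<in> S" and max: "\<forall>a\<in>S. \<bar>a\<bar> \<le> \<bar>a0\<bar>"
    using Max_in[of "abs ` S"] Max_ge[of "abs ` S"] S by fastforce
  define N where "N = nat (2 * \<bar>a0\<bar> * \<bar>a0\<bar> + 2 * \<bar>a0\<bar>) + 2 * card S"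
  have "simple_spectrum \<gamma> n" if "prime n" "n > N" for n
    using simple_spectrum_of_integer_weights[OF that(1), of \<gamma> c Q a0] S(1) c asym_c a0 max that(2)
    unfolding S_def N_def by linarith
  then show ?thesis by blast
qed

theorem theorem4:
  fixes \<gamma> :: "int \<Rightarrow> real"
  assumes nonneg: "\<forall>a. 0 \<le> \<gamma> a"
    and bounded_supp: "finite (supp_dist \<gamma>)"
    and total: "(\<Sum>a\<in>supp_dist \<gamma>. \<gamma> a) = 1"
    and rational: "\<forall>a. \<gamma> a \<in> \<rat>"
  shows "(\<forall>a. \<gamma> a = \<gamma> (- a)) \<or>
         (\<exists>N::nat. \<forall>n::nat. prime n \<and> n > N \<longrightarrow> reconstructive \<gamma> n)"
  using simple_spectrum_for_large_primes[OF assms] simple_spectrum_imp_reconstructive by blast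

end
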